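(* There exists a constant $c>0$ such that for all sufficiently large $n$ and all $r\ge0$, $0<\epsilon\le 1$, $R>\epsilon$, with probability at least $1-1/n$ the flooding time of the stationary geometric-MEG $\mathcal{G}(n,r,R,\epsilon)$ is at least $c\,\frac{\sqrt n}{R+r}$.
   Context: $L_{n,\epsilon}=\{(i\epsilon,j\epsilon): i,j\in\mathbb{N},\ i,j\le\sqrt n/\epsilon\}$; $\Gamma(\mathbf{x})=\{\mathbf{y}\in L_{n,\epsilon}:d(\mathbf{x},\mathbf{y})\le r\}$ with $d$ Euclidean distance. Each node $i\in[n]$ has position $P_{i,t}\in L_{n,\epsilon}$ evolving independently as a Markov chain that moves from $\mathbf{x}$ to a uniform random point of $\Gamma(\mathbf{x})$. The geometric-MEG $\mathcal{G}(n,r,R,\epsilon)=\{G_t\}$ has $G_t=([n],E_t)$, $E_t=\{\{i,j\}: d(P_{i,t},P_{j,t})\le R\}$. It is stationary when the initial positions are independent with law $\pi(\mathbf{x})=|\Gamma(\mathbf{x})|/\sum_{\mathbf{y}}|\Gamma(\mathbf{y})|$. Flooding from source $s$: $I_0=\{s\}$, $I_{t+1}=I_t\cup N_t(I_t)$, where $N_t(I)$ is the set of nodes outside $I$ adjacent in $G_t$ to a node of $I$; $T(s)$ is the first $t$ with $I_t=[n]$, and the flooding time is $\max_s T(s)$. *)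

theory Defs
  imports "HOL-Probability.Probability"
begin

type_synonym point = "real \<times> real"

definition edist :: "point \<Rightarrow> point \<Rightarrow> real" where
  "edist x y = sqrt ((fst x - fst y)^2 + (snd x - snd y)^2)"

definition grid :: "nat \<Rightarrow> real \<Rightarrow> point set" where
  "grid n \<epsilon> = {(real i * \<epsilon>, real j * \<epsilon>) | i j :: nat.
      real i \<le> sqrt (real n) / \<epsilon> \<and> real j \<le> sqrt (real n) / \<epsilon>}"

definition Gamma :: "nat \<Rightarrow> real \<Rightarrow> real \<Rightarrow> point \<Rightarrow> point set" where
  "Gamma n \<epsilon> r x = {y \<in> grid n \<epsilon>. edist x y \<le> r}"

definition stat_pi :: "nat \<Rightarrow> real \<Rightarrow> real \<Rightarrow> point pmf" where
  "stat_pi n \<epsilon> r = embed_pmf (\<lambda>x. if x \<in> grid n \<epsilon>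
      then real (card (Gamma n \<epsilon> r x)) / (\<Sum>y\<in>grid n \<epsilon>. real (card (Gamma n \<epsilon> r y)))
      else 0)"

definition step_pmf :: "nat \<Rightarrow> real \<Rightarrow> real \<Rightarrow> point \<Rightarrow> point pmf" where
  "step_pmf n \<epsilon> r x = pmf_of_set (Gamma n \<epsilon> r x)"

fun traj :: "nat \<Rightarrow> real \<Rightarrow> real \<Rightarrow> nat \<Rightarrow> point list pmf" where
  "traj n \<epsilon> r 0 = map_pmf (\<lambda>x. [x]) (stat_pi n \<epsilon> r)"
| "traj n \<epsilon> r (Suc m) = bind_pmf (traj n \<epsilon> r m)
      (\<lambda>xs. map_pmf (\<lambda>y. xs @ [y]) (step_pmf n \<epsilon> r (last xs)))"

definition meg_pmf :: "nat \<Rightarrow> real \<Rightarrow> real \<Rightarrow> nat \<Rightarrow> (nat \<Rightarrow> point list) pmf" where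
  "meg_pmf n \<epsilon> r m = Pi_pmf {..<n} [] (\<lambda>i. traj n \<epsilon> r m)"

text \<open>Positions P_{i,t}; after the horizon m the last position is held
  (irrelevant for events depending only on times below m).\<close>
definition positions :: "nat \<Rightarrow> (nat \<Rightarrow> point list) \<Rightarrow> nat \<Rightarrow> nat \<Rightarrow> point" where
  "positions m \<omega> i t = \<omega> i ! min t m"

definition adj :: "real \<Rightarrow> (nat \<Rightarrow> nat \<Rightarrow> point) \<Rightarrow> nat \<Rightarrow> nat \<Rightarrow> nat \<Rightarrow> bool" where
  "adj R pos t i j \<longleftrightarrow> i \<noteq> j \<and> edist (pos i t) (pos j t) \<le> R"

primrec flood_set :: "nat \<Rightarrow> real \<Rightarrow> (nat \<Rightarrow> nat \<Rightarrow> point) \<Rightarrow> nat \<Rightarrow> nat \<Rightarrow> nat set" where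
  "flood_set n R pos s 0 = {s}"
| "flood_set n R pos s (Suc t) = flood_set n R pos s t \<union>
     {j \<in> {..<n} - flood_set n R pos s t. \<exists>i\<in>flood_set n R pos s t. adj R pos t i j}"

definition flood_time_from :: "nat \<Rightarrow> real \<Rightarrow> (nat \<Rightarrow> nat \<Rightarrow> point) \<Rightarrow> nat \<Rightarrow> enat" where
  "flood_time_from n R pos s =
     (if \<exists>t. flood_set n R pos s t = {..<n}
      then enat (LEAST t. flood_set n R pos s t = {..<n}) else \<infinity>)"

definition flooding_time :: "nat \<Rightarrow> real \<Rightarrow> (nat \<Rightarrow> nat \<Rightarrow> point) \<Rightarrow> enat" where
  "flooding_time n R pos = (SUP s\<in>{..<n}. flood_time_from n R pos s)"

end

theory Submission
  imports Defs
begin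

(* Idea: information crosses at most one edge (length <= R) per step and every node
   moves at most r per step, so if two nodes start at distance D, flooding from one of
   them needs at least D / (2(R + r)) steps.  It remains to show that, with probability
   at least 1 - 1/n, two nodes start at distance at least sqrt n / 6.

   The theorem follows with c = 1/12. *)

section \<open>The grid, neighbourhoods and the stationary law\<close>

lemma edist_eq_dist: "edist x y = dist x y"
  by (cases x; cases y) (simp add: edist_def dist_Pair_Pair dist_real_def)

text \<open>The largest coordinate index of the grid: the grid is
  \<open>{0, \<epsilon>, ..., K\<epsilon>}\<^sup>2\<close> with \<open>K = grid_max n \<epsilon>\<close>.\<close>
definition grid_max :: "nat \<Rightarrow> real \<Rightarrow> nat" where
  "grid_max n \<epsilon> = nat \<lfloor>sqrt (real n) / \<epsilon>\<rfloor>"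

lemma mem_grid_iff:
  assumes "\<epsilon> > 0"
  shows "x \<in> grid n \<epsilon> \<longleftrightarrow>
    (\<exists>i j. i \<le> grid_max n \<epsilon> \<and> j \<le> grid_max n \<epsilon> \<and> x = (real i * \<epsilon>, real j * \<epsilon>))"
proof -
  have "real i \<le> sqrt (real n) / \<epsilon> \<longleftrightarrow> i \<le> grid_max n \<epsilon>" for i
    using assms by (simp add: grid_max_def le_nat_iff le_floor_iff)
  then show ?thesis unfolding grid_def by blast
qed

lemma finite_grid: "\<epsilon> > 0 \<Longrightarrow> finite (grid n \<epsilon>)"
proof -
  assume "\<epsilon> > 0"
  then have "grid n \<epsilon> = (\<lambda>(i, j). (real i * \<epsilon>, real j * \<epsilon>)) ` ({..grid_max n \<epsilon>} \<times> {..grid_max n \<epsilon>})"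
    by (auto simp: mem_grid_iff)
  then show ?thesis by simp
qed

lemma origin_in_grid: "\<epsilon> > 0 \<Longrightarrow> (0, 0) \<in> grid n \<epsilon>"
  by (auto simp: mem_grid_iff intro!: exI[of _ 0])

lemma Gamma_eq: "Gamma n \<epsilon> r x = {y \<in> grid n \<epsilon>. dist x y \<le> r}"
  by (simp add: Gamma_def edist_eq_dist)

lemma finite_Gamma: "\<epsilon> > 0 \<Longrightarrow> finite (Gamma n \<epsilon> r x)"
  unfolding Gamma_eq using finite_grid by auto

lemma self_in_Gamma: "r \<ge> 0 \<Longrightarrow> x \<in> grid n \<epsilon> \<Longrightarrow> x \<in> Gamma n \<epsilon> r x"
  by (simp add: Gamma_eq)

definition Gamma_total :: "nat \<Rightarrow> real \<Rightarrow> real \<Rightarrow> real" where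
  "Gamma_total n \<epsilon> r = (\<Sum>y\<in>grid n \<epsilon>. real (card (Gamma n \<epsilon> r y)))"

lemma Gamma_total_pos: "\<epsilon> > 0 \<Longrightarrow> r \<ge> 0 \<Longrightarrow> Gamma_total n \<epsilon> r > 0"
proof -
  assume "\<epsilon> > 0" "r \<ge> 0"
  then have "card (Gamma n \<epsilon> r (0, 0)) > 0"
    by (metis card_gt_0_iff empty_iff finite_Gamma origin_in_grid self_in_Gamma)
  then show ?thesis
    unfolding Gamma_total_def using \<open>\<epsilon> > 0\<close> by (intro sum_pos2[OF finite_grid origin_in_grid]) auto
qed

lemma pmf_stat_pi:
  assumes "\<epsilon> > 0" "r \<ge> 0"
  shows "pmf (stat_pi n \<epsilon> r) x =
    (if x \<in> grid n \<epsilon> then real (card (Gamma n \<epsilon> r x)) / Gamma_total n \<epsilon> r else 0)"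
proof -
  define f where "f x = (if x \<in> grid n \<epsilon> then real (card (Gamma n \<epsilon> r x)) / Gamma_total n \<epsilon> r else 0)"
    for x
  have nonneg: "0 \<le> f x" for x
    unfolding f_def Gamma_total_def by (auto intro!: divide_nonneg_nonneg sum_nonneg)
  have "(\<integral>\<^sup>+x. ennreal (f x) \<partial>count_space UNIV) = (\<Sum>x\<in>grid n \<epsilon>. ennreal (f x))"
    by (rule nn_integral_count_space') (auto simp: f_def finite_grid assms)
  also have "\<dots> = ennreal (\<Sum>x\<in>grid n \<epsilon>. f x)"
    by (rule sum_ennreal, rule nonneg)
  also have "(\<Sum>x\<in>grid n \<epsilon>. f x) = 1"
    using Gamma_total_pos[OF assms, of n]
    by (simp add: f_def sum_divide_distrib[symmetric] Gamma_total_def)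
  finally have "pmf (embed_pmf f) x = f x"
    by (intro pmf_embed_pmf nonneg) simp
  then show ?thesis unfolding stat_pi_def f_def Gamma_total_def by simp
qed

lemma set_stat_pi: "\<epsilon> > 0 \<Longrightarrow> r \<ge> 0 \<Longrightarrow> set_pmf (stat_pi n \<epsilon> r) \<subseteq> grid n \<epsilon>"
  by (auto simp: set_pmf_eq pmf_stat_pi split: if_splits)

lemma prob_stat_pi:
  assumes "\<epsilon> > 0" "r \<ge> 0" "S \<subseteq> grid n \<epsilon>"
  shows "measure_pmf.prob (stat_pi n \<epsilon> r) S =
    (\<Sum>x\<in>S. real (card (Gamma n \<epsilon> r x))) / Gamma_total n \<epsilon> r"
proof -
  have "finite S" using assms finite_grid finite_subset by blast
  then have "measure_pmf.prob (stat_pi n \<epsilon> r) S = (\<Sum>x\<in>S. pmf (stat_pi n \<epsilon> r) x)"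
    by (rule measure_measure_pmf_finite)
  also have "\<dots> = (\<Sum>x\<in>S. real (card (Gamma n \<epsilon> r x)) / Gamma_total n \<epsilon> r)"
    using assms by (intro sum.cong) (auto simp: pmf_stat_pi)
  finally show ?thesis by (simp add: sum_divide_distrib)
qed

section \<open>Mass of the outer thirds of the grid\<close>

lemma card_le_fibres_card_image:
  assumes "finite A" and fibres: "\<And>w. card {x\<in>A. f x = w} \<le> k"
  shows "card A \<le> k * card (f ` A)"
proof -
  have "card A \<le> card (\<Union>w\<in>f ` A. {x\<in>A. f x = w})"
    by (rule card_mono) (use assms in auto)
  also have "\<dots> \<le> (\<Sum>w\<in>f ` A. card {x\<in>A. f x = w})"
    by (rule card_UN_le) (use assms in simp)
  also have "\<dots> \<le> (\<Sum>w\<in>f ` A. k)" by (intro sum_mono fibres)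
  finally show ?thesis by (simp add: mult.commute)
qed

text \<open>Folding lemma in an arbitrary finite metric space: a non-expanding self-map
  with fibres of size at most \<open>k\<close> maps every neighbourhood pair to a neighbourhood
  pair, so the total neighbourhood size over its image is at least a \<open>1/k\<^sup>2\<close>
  share of the total.\<close>
lemma neighbourhood_total_fold:
  fixes X :: "'a::metric_space set" and g :: "'a \<Rightarrow> 'a"
  assumes "finite X" and maps: "g ` X \<subseteq> X"
    and nonexp: "\<And>x y. x \<in> X \<Longrightarrow> y \<in> X \<Longrightarrow> dist (g x) (g y) \<le> dist x y"
    and fibres: "\<And>w. card {x\<in>X. g x = w} \<le> k"
  shows "(\<Sum>x\<in>X. card {y\<in>X. dist x y \<le> r}) \<le> k^2 * (\<Sum>x\<in>g ` X. card {y\<in>X. dist x y \<le> r})"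
proof -
  define nb where "nb x = {y\<in>X. dist x y \<le> r}" for x
  define P where "P = Sigma X nb"
  define Q where "Q = Sigma (g ` X) nb"
  have "finite P" "finite Q" unfolding P_def Q_def nb_def using \<open>finite X\<close> by auto
  have image: "map_prod g g ` P \<subseteq> Q"
  proof
    fix q assume "q \<in> map_prod g g ` P"
    then obtain x y where "x \<in> X" "y \<in> X" "dist x y \<le> r" "q = (g x, g y)"
      unfolding P_def nb_def by auto
    then show "q \<in> Q" using maps nonexp[of x y] unfolding Q_def nb_def by auto
  qed
  have "card {p\<in>P. map_prod g g p = w} \<le> k^2" for w
  proof -
    let ?A = "{x\<in>X. g x = fst w}" and ?B = "{x\<in>X. g x = snd w}"
    have "{p\<in>P. map_prod g g p = w} \<subseteq> ?A \<times> ?B"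
      unfolding P_def nb_def by auto
    then have "card {p\<in>P. map_prod g g p = w} \<le> card (?A \<times> ?B)"
      by (rule card_mono[rotated]) (use \<open>finite X\<close> in simp)
    also have "\<dots> = card ?A * card ?B" by (rule card_cartesian_product)
    also have "\<dots> \<le> k^2" unfolding power2_eq_square by (intro mult_mono fibres) auto
    finally show ?thesis .
  qed
  then have "card P \<le> k^2 * card (map_prod g g ` P)"
    by (rule card_le_fibres_card_image[OF \<open>finite P\<close>])
  also have "\<dots> \<le> k^2 * card Q" using card_mono[OF \<open>finite Q\<close> image] by simp
  finally show ?thesis
    using \<open>finite X\<close> unfolding P_def Q_def nb_def by (simp add: finite_imageI)
qed

lemma stat_pi_fold_mass:
  assumes eps: "\<epsilon> > 0" and r: "r \<ge> 0"
    and maps: "g ` grid n \<epsilon> \<subseteq> S" "S \<subseteq> grid n \<epsilon>"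
    and nonexp: "\<And>x y. dist (g x) (g y) \<le> dist x y"
    and fibres: "\<And>w. card {x\<in>grid n \<epsilon>. g x = w} \<le> k"
  shows "measure_pmf.prob (stat_pi n \<epsilon> r) S \<ge> 1 / real (k^2)"
proof -
  let ?X = "grid n \<epsilon>"
  let ?c = "\<lambda>x. card (Gamma n \<epsilon> r x)"
  have fin: "finite ?X" using finite_grid[OF eps] .
  have "g ` ?X \<subseteq> ?X" using maps by blast
  from neighbourhood_total_fold[OF fin this nonexp fibres, of r]
  have "(\<Sum>x\<in>?X. ?c x) \<le> k^2 * (\<Sum>x\<in>g ` ?X. ?c x)"
    by (simp only: Gamma_eq)
  also have "(\<Sum>x\<in>g ` ?X. ?c x) \<le> (\<Sum>x\<in>S. ?c x)"
    using maps fin by (intro sum_mono2) (auto intro: finite_subset)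
  finally have "real (\<Sum>x\<in>?X. ?c x) \<le> real (k^2 * (\<Sum>x\<in>S. ?c x))"
    by (simp only: of_nat_le_iff mult_le_mono2)
  then have total: "Gamma_total n \<epsilon> r \<le> real (k^2) * (\<Sum>x\<in>S. real (?c x))"
    unfolding Gamma_total_def by (simp only: of_nat_mult of_nat_sum)
  moreover have "Gamma_total n \<epsilon> r > 0" using Gamma_total_pos[OF eps r] .
  ultimately have "real (k^2) > 0"
    by (smt (verit) mult_nonpos_nonneg of_nat_0_le_iff sum_nonneg)
  with total show ?thesis
    using Gamma_total_pos[OF eps r] by (simp add: prob_stat_pi[OF eps r maps(2)] field_simps)
qed

lemma stat_pi_isometry_invariant:
  assumes eps: "\<epsilon> > 0" and r: "r \<ge> 0" and onto: "h ` grid n \<epsilon> = grid n \<epsilon>"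
    and iso: "\<And>x y. dist (h x) (h y) = dist x y" and S: "S \<subseteq> grid n \<epsilon>"
  shows "measure_pmf.prob (stat_pi n \<epsilon> r) (h ` S) = measure_pmf.prob (stat_pi n \<epsilon> r) S"
proof -
  have inj: "inj h" by (rule injI) (metis iso dist_eq_0_iff)
  have "Gamma n \<epsilon> r (h x) = h ` Gamma n \<epsilon> r x" for x
    unfolding Gamma_eq
  proof (intro equalityI subsetI)
    fix y assume y: "y \<in> {y \<in> grid n \<epsilon>. dist (h x) y \<le> r}"
    then obtain z where "z \<in> grid n \<epsilon>" "y = h z" using onto by blast
    then show "y \<in> h ` {y \<in> grid n \<epsilon>. dist x y \<le> r}" using y by (auto simp: iso)
  qed (use onto in \<open>auto simp: iso\<close>)
  then have "card (Gamma n \<epsilon> r (h x)) = card (Gamma n \<epsilon> r x)" for x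
    using inj by (simp add: card_image inj_on_subset)
  then have "(\<Sum>x\<in>h ` S. real (card (Gamma n \<epsilon> r x))) = (\<Sum>x\<in>S. real (card (Gamma n \<epsilon> r x)))"
    using inj by (simp add: sum.reindex inj_on_subset)
  moreover have "h ` S \<subseteq> grid n \<epsilon>" using S onto by blast
  ultimately show ?thesis using S by (simp add: prob_stat_pi[OF eps r])
qed

definition tent :: "real \<Rightarrow> real \<Rightarrow> real" where
  "tent a u = (if u \<le> a then u else if u \<le> 2*a then 2*a - u else u - 2*a)"

definition tent_index :: "nat \<Rightarrow> nat \<Rightarrow> nat" where
  "tent_index a i = (if i \<le> a then i else if i \<le> 2*a then 2*a - i else i - 2*a)"

lemma tent_nonexpanding: "a \<ge> 0 \<Longrightarrow> dist (tent a u) (tent a v) \<le> dist u v"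
  unfolding tent_def dist_real_def by (auto simp: abs_if)

lemma tent_fibre: "tent a u = w \<Longrightarrow> u \<in> {w, 2*a - w, w + 2*a}"
  unfolding tent_def by (auto split: if_splits)

lemma tent_index_le: "tent_index a i \<le> i" and tent_index_le_width: "i \<le> 3*a \<Longrightarrow> tent_index a i \<le> a"
  unfolding tent_index_def by auto

lemma tent_on_grid:
  assumes "\<epsilon> > 0"
  shows "tent (real a * \<epsilon>) (real i * \<epsilon>) = real (tent_index a i) * \<epsilon>"
proof -
  have "real i * \<epsilon> \<le> real a * \<epsilon> \<longleftrightarrow> i \<le> a"
    and "real i * \<epsilon> \<le> 2 * (real a * \<epsilon>) \<longleftrightarrow> i \<le> 2 * a"
    using assms by (simp_all add: mult.assoc[symmetric]) linarith
  then show ?thesis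
    unfolding tent_def tent_index_def by (auto simp: of_nat_diff algebra_simps)
qed

lemma dist_map_fst_le:
  assumes "\<And>u v. dist (f u) (f v) \<le> dist u v"
  shows "dist (f (fst x), snd x) (f (fst y), snd y) \<le> dist x y"
proof -
  have "dist (f (fst x), snd x) (f (fst y), snd y) =
      sqrt ((dist (f (fst x)) (f (fst y)))^2 + (dist (snd x) (snd y))^2)"
    by (simp add: dist_Pair_Pair)
  also have "\<dots> \<le> sqrt ((dist (fst x) (fst y))^2 + (dist (snd x) (snd y))^2)"
    by (intro real_sqrt_le_mono add_mono power_mono assms) auto
  also have "\<dots> = dist x y" by (cases x; cases y) (simp add: dist_Pair_Pair)
  finally show ?thesis .
qed

definition strip_width :: "nat \<Rightarrow> real \<Rightarrow> nat" where
  "strip_width n \<epsilon> = (grid_max n \<epsilon> + 2) div 3"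

definition left_third :: "nat \<Rightarrow> real \<Rightarrow> point set" where
  "left_third n \<epsilon> = {x\<in>grid n \<epsilon>. fst x \<le> real (strip_width n \<epsilon>) * \<epsilon>}"

definition mirror :: "nat \<Rightarrow> real \<Rightarrow> point \<Rightarrow> point" where
  "mirror n \<epsilon> x = (real (grid_max n \<epsilon>) * \<epsilon> - fst x, snd x)"

definition right_third :: "nat \<Rightarrow> real \<Rightarrow> point set" where
  "right_third n \<epsilon> = mirror n \<epsilon> ` left_third n \<epsilon>"

lemma left_third_mass:
  assumes eps: "\<epsilon> > 0" and r: "r \<ge> 0"
  shows "measure_pmf.prob (stat_pi n \<epsilon> r) (left_third n \<epsilon>) \<ge> 1/9"
proof -
  define K where "K = grid_max n \<epsilon>"
  define a where "a = strip_width n \<epsilon>"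
  define g where "g x = (tent (real a * \<epsilon>) (fst x), snd x)" for x :: point
  have K3: "K \<le> 3 * a" unfolding K_def a_def strip_width_def by simp
  have "g ` grid n \<epsilon> \<subseteq> left_third n \<epsilon>"
  proof
    fix y assume "y \<in> g ` grid n \<epsilon>"
    then obtain i j where ij: "i \<le> K" "j \<le> K" "y = (real (tent_index a i) * \<epsilon>, real j * \<epsilon>)"
      by (auto simp: g_def mem_grid_iff[OF eps] tent_on_grid[OF eps] K_def)
    moreover have "tent_index a i \<le> K" "tent_index a i \<le> a"
      using ij tent_index_le[of a i] tent_index_le_width[of i a] K3 by auto
    ultimately show "y \<in> left_third n \<epsilon>"
      using eps by (auto simp: left_third_def mem_grid_iff K_def a_def)
  qed
  moreover have "dist (g x) (g y) \<le> dist x y" for x y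
    unfolding g_def by (intro dist_map_fst_le tent_nonexpanding) (use eps in simp)
  moreover have "card {x\<in>grid n \<epsilon>. g x = w} \<le> 3" for w
  proof -
    define b where "b = real a * \<epsilon>"
    have "{x\<in>grid n \<epsilon>. g x = w} \<subseteq> {(fst w, snd w), (2*b - fst w, snd w), (fst w + 2*b, snd w)}"
      using tent_fibre unfolding g_def b_def by fastforce
    then have "card {x\<in>grid n \<epsilon>. g x = w} \<le> card {(fst w, snd w), (2*b - fst w, snd w), (fst w + 2*b, snd w)}"
      by (rule card_mono[rotated]) simp
    also have "\<dots> \<le> 3" by (simp add: card_insert_if)
    finally show ?thesis .
  qed
  ultimately have "measure_pmf.prob (stat_pi n \<epsilon> r) (left_third n \<epsilon>) \<ge> 1 / real (3^2)"
    by (intro stat_pi_fold_mass[OF eps r]) (auto simp: left_third_def)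
  then show ?thesis by simp
qed

lemma dist_reflect_real: "dist (c - u) (c - v) = dist u (v::real)"
  by (simp add: dist_real_def abs_if)

lemma mirror_isometry: "dist (mirror n \<epsilon> x) (mirror n \<epsilon> y) = dist x y"
  by (cases x; cases y) (simp add: mirror_def dist_Pair_Pair dist_reflect_real)

lemma mirror_involutive: "mirror n \<epsilon> (mirror n \<epsilon> x) = x"
  by (simp add: mirror_def)

lemma mirror_grid:
  assumes eps: "\<epsilon> > 0"
  shows "mirror n \<epsilon> ` grid n \<epsilon> = grid n \<epsilon>"
proof -
  have into: "mirror n \<epsilon> x \<in> grid n \<epsilon>" if x: "x \<in> grid n \<epsilon>" for x
  proof -
    obtain i j where ij: "i \<le> grid_max n \<epsilon>" "j \<le> grid_max n \<epsilon>" "x = (real i * \<epsilon>, real j * \<epsilon>)"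
      using x by (auto simp: mem_grid_iff[OF eps])
    then have "mirror n \<epsilon> x = (real (grid_max n \<epsilon> - i) * \<epsilon>, real j * \<epsilon>)"
      by (simp add: mirror_def of_nat_diff left_diff_distrib)
    then show ?thesis
      unfolding mem_grid_iff[OF eps] using ij(2) by (intro exI[of _ "grid_max n \<epsilon> - i"] exI[of _ j]) simp
  qed
  have "x \<in> mirror n \<epsilon> ` grid n \<epsilon>" if "x \<in> grid n \<epsilon>" for x
    using imageI[OF into[OF that], of "mirror n \<epsilon>"] by (simp only: mirror_involutive)
  with into show ?thesis by (intro equalityI subsetI) auto
qed

lemma right_third_mass:
  assumes eps: "\<epsilon> > 0" and r: "r \<ge> 0"
  shows "measure_pmf.prob (stat_pi n \<epsilon> r) (right_third n \<epsilon>) \<ge> 1/9"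
proof -
  have "left_third n \<epsilon> \<subseteq> grid n \<epsilon>" by (auto simp: left_third_def)
  then have "measure_pmf.prob (stat_pi n \<epsilon> r) (right_third n \<epsilon>) =
      measure_pmf.prob (stat_pi n \<epsilon> r) (left_third n \<epsilon>)"
    unfolding right_third_def
    by (rule stat_pi_isometry_invariant[OF eps r mirror_grid[OF eps] mirror_isometry])
  with left_third_mass[OF eps r] show ?thesis by simp
qed

text \<open>For \<open>n \<ge> 100\<close> and \<open>\<epsilon> \<le> 1\<close> the grid has side close to \<open>\<surd>n\<close>, so the two
  outer thirds are at distance at least \<open>\<surd>n / 6\<close>.\<close>
lemma grid_side_ge:
  assumes eps: "\<epsilon> > 0"
  shows "real (grid_max n \<epsilon>) * \<epsilon> \<ge> sqrt (real n) - \<epsilon>"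
proof -
  have "real (grid_max n \<epsilon>) > sqrt (real n) / \<epsilon> - 1"
    unfolding grid_max_def using eps by (simp add: of_nat_nat)
  then have "real (grid_max n \<epsilon>) * \<epsilon> \<ge> (sqrt (real n) / \<epsilon> - 1) * \<epsilon>"
    using eps by (intro mult_right_mono) auto
  moreover have "(sqrt (real n) / \<epsilon> - 1) * \<epsilon> = sqrt (real n) - \<epsilon>"
    using eps by (simp add: field_simps)
  ultimately show ?thesis by simp
qed

lemma thirds_far_apart:
  assumes eps: "\<epsilon> > 0" "\<epsilon> \<le> 1" and n: "100 \<le> n"
    and x: "x \<in> left_third n \<epsilon>" and y: "y \<in> right_third n \<epsilon>"
  shows "sqrt (real n) / 6 \<le> dist y x"
proof -
  define K where "K = real (grid_max n \<epsilon>)"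
  define a where "a = real (strip_width n \<epsilon>)"
  have "sqrt 100 \<le> sqrt (real n)" using n by (intro real_sqrt_le_mono) simp
  then have s10: "10 \<le> sqrt (real n)" by simp
  have "3 * strip_width n \<epsilon> \<le> grid_max n \<epsilon> + 2" unfolding strip_width_def by simp
  then have a3: "3 * a \<le> K + 2" unfolding a_def K_def by linarith
  obtain x' where "x' \<in> left_third n \<epsilon>" "y = mirror n \<epsilon> x'"
    using y unfolding right_third_def by blast
  then have "fst y \<ge> K * \<epsilon> - a * \<epsilon>" "fst x \<le> a * \<epsilon>"
    using x by (auto simp: left_third_def mirror_def K_def a_def)
  moreover have "3 * (a * \<epsilon>) \<le> K * \<epsilon> + 2 * \<epsilon>"
    using mult_right_mono[OF a3, of \<epsilon>] eps by (simp add: algebra_simps)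
  moreover have "K * \<epsilon> \<ge> sqrt (real n) - \<epsilon>" using grid_side_ge[OF eps(1)] by (simp add: K_def)
  ultimately have "fst y - fst x \<ge> sqrt (real n) / 6" using eps s10 by linarith
  moreover have "dist (fst y) (fst x) \<le> dist y x" by (rule dist_fst_le)
  ultimately show ?thesis unfolding dist_real_def by linarith
qed

section \<open>Trajectories\<close>

lemma traj_support:
  assumes eps: "\<epsilon> > 0" and r: "r \<ge> 0" and xs: "xs \<in> set_pmf (traj n \<epsilon> r m)"
  shows "length xs = Suc m \<and> set xs \<subseteq> grid n \<epsilon> \<and> (\<forall>k<m. dist (xs!k) (xs!Suc k) \<le> r)"
  using xs
proof (induction m arbitrary: xs)
  case 0
  then obtain x where "x \<in> set_pmf (stat_pi n \<epsilon> r)" "xs = [x]" by auto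
  then show ?case using set_stat_pi[OF eps r] by auto
next
  case (Suc m)
  from Suc.prems obtain ys y where ys: "ys \<in> set_pmf (traj n \<epsilon> r m)"
    and y: "y \<in> set_pmf (step_pmf n \<epsilon> r (last ys))" and xs: "xs = ys @ [y]"
    by auto
  have len: "length ys = Suc m" and grid: "set ys \<subseteq> grid n \<epsilon>"
    and steps: "\<forall>k<m. dist (ys!k) (ys!Suc k) \<le> r"
    using Suc.IH[OF ys] by auto
  have "ys \<noteq> []" using len by auto
  then have last: "last ys = ys ! m" "last ys \<in> grid n \<epsilon>"
    using len grid by (auto simp: last_conv_nth dest: last_in_set)
  have "set_pmf (step_pmf n \<epsilon> r (last ys)) = Gamma n \<epsilon> r (last ys)"
    unfolding step_pmf_def
    by (rule set_pmf_of_set) (use self_in_Gamma[OF r last(2)] finite_Gamma[OF eps] in auto)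
  then have y_grid: "y \<in> grid n \<epsilon>" and last_step: "dist (ys ! m) y \<le> r"
    using y last by (auto simp: Gamma_eq)
  have "dist (xs!k) (xs!Suc k) \<le> r" if "k < Suc m" for k
  proof (cases "k < m")
    case True
    then show ?thesis using steps len xs by (simp add: nth_append)
  next
    case False
    then have "k = m" using that by simp
    then show ?thesis using last_step len xs by (simp add: nth_append)
  qed
  then show ?case using len grid y_grid xs by auto
qed

lemma traj_start:
  assumes eps: "\<epsilon> > 0" and r: "r \<ge> 0"
  shows "map_pmf (\<lambda>xs. xs!0) (traj n \<epsilon> r m) = stat_pi n \<epsilon> r"
proof (induction m)
  case 0
  then show ?case by (simp add: pmf.map_comp o_def)
next
  case (Suc m)
  have "map_pmf (\<lambda>xs. xs!0) (traj n \<epsilon> r (Suc m)) =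
      bind_pmf (traj n \<epsilon> r m) (\<lambda>xs. return_pmf (xs!0))"
    unfolding traj.simps map_bind_pmf
  proof (rule bind_pmf_cong[OF refl])
    fix xs assume "xs \<in> set_pmf (traj n \<epsilon> r m)"
    then have "xs \<noteq> []" using traj_support[OF eps r] by force
    then show "map_pmf (\<lambda>xs. xs!0) (map_pmf (\<lambda>y. xs @ [y]) (step_pmf n \<epsilon> r (last xs))) = return_pmf (xs!0)"
      by (simp add: pmf.map_comp o_def nth_append)
  qed
  then show ?case using Suc by (simp add: map_pmf_def)
qed

lemma meg_positions_step:
  assumes eps: "\<epsilon> > 0" and r: "r \<ge> 0"
    and \<omega>: "\<omega> \<in> set_pmf (meg_pmf n \<epsilon> r m)" and i: "i < n"
  shows "dist (positions m \<omega> i (Suc t)) (positions m \<omega> i t) \<le> r"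
proof (cases "t < m")
  case True
  have "\<omega> i \<in> set_pmf (traj n \<epsilon> r m)"
    using \<omega> i unfolding meg_pmf_def set_Pi_pmf[OF finite_lessThan] PiE_dflt_def by auto
  then have "dist (\<omega> i ! t) (\<omega> i ! Suc t) \<le> r" using traj_support[OF eps r] True by blast
  then show ?thesis using True by (simp add: positions_def dist_commute)
qed (use r in \<open>simp add: positions_def\<close>)

lemma prob_no_start_in:
  assumes eps: "\<epsilon> > 0" and r: "r \<ge> 0"
  shows "measure_pmf.prob (meg_pmf n \<epsilon> r m) {\<omega>. \<forall>i<n. \<omega> i ! 0 \<notin> S} =
    (1 - measure_pmf.prob (stat_pi n \<epsilon> r) S) ^ n"
proof -
  let ?M = "meg_pmf n \<epsilon> r m"
  define C where "C = {xs :: point list. xs ! 0 \<notin> S}"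
  have "set_pmf ?M \<subseteq> {f. \<forall>x. x \<notin> {..<n} \<longrightarrow> f x = []}"
    unfolding meg_pmf_def by (rule set_Pi_pmf_subset) simp
  then have "{\<omega>. \<forall>i<n. \<omega> i ! 0 \<notin> S} \<inter> set_pmf ?M = PiE_dflt {..<n} [] (\<lambda>_. C) \<inter> set_pmf ?M"
    unfolding PiE_dflt_def C_def by auto
  then have "measure_pmf.prob ?M {\<omega>. \<forall>i<n. \<omega> i ! 0 \<notin> S} =
      measure_pmf.prob ?M (PiE_dflt {..<n} [] (\<lambda>_. C))"
    by (metis (no_types) measure_Int_set_pmf)
  also have "\<dots> = (\<Prod>i<n. measure_pmf.prob (traj n \<epsilon> r m) C)"
    unfolding meg_pmf_def by (rule measure_Pi_pmf_PiE_dflt) simp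
  also have "measure_pmf.prob (traj n \<epsilon> r m) C =
      measure_pmf.prob (map_pmf (\<lambda>xs. xs!0) (traj n \<epsilon> r m)) (UNIV - S)"
    unfolding C_def by (simp add: vimage_def)
  also have "\<dots> = measure_pmf.prob (stat_pi n \<epsilon> r) (UNIV - S)"
    by (simp only: traj_start[OF eps r])
  also have "\<dots> = 1 - measure_pmf.prob (stat_pi n \<epsilon> r) S"
    using measure_pmf.prob_compl[of S "stat_pi n \<epsilon> r"] by simp
  finally show ?thesis by simp
qed

lemma far_starting_points:
  assumes eps: "\<epsilon> > 0" "\<epsilon> \<le> 1" and r: "r \<ge> 0" and n: "100 \<le> n"
  shows "measure_pmf.prob (meg_pmf n \<epsilon> r m)
           {\<omega>. \<exists>a<n. \<exists>b<n. sqrt (real n) / 6 \<le> dist (\<omega> b ! 0) (\<omega> a ! 0)} \<ge> 1 - 2 * (8/9)^n"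
proof -
  let ?M = "meg_pmf n \<epsilon> r m"
  let ?E = "{\<omega>. \<exists>a<n. \<exists>b<n. sqrt (real n) / 6 \<le> dist (\<omega> b ! 0) (\<omega> a ! 0)}"
  let ?none = "\<lambda>S. {\<omega>. \<forall>i<n. \<omega> i ! 0 \<notin> S}"
  have none: "measure_pmf.prob ?M (?none S) \<le> (8/9)^n"
    if "measure_pmf.prob (stat_pi n \<epsilon> r) S \<ge> 1/9" for S
    unfolding prob_no_start_in[OF eps(1) r]
    using that measure_pmf.prob_le_1 by (intro power_mono) auto
  have "UNIV - ?E \<subseteq> ?none (left_third n \<epsilon>) \<union> ?none (right_third n \<epsilon>)"
    using thirds_far_apart[OF eps n] by blast
  then have "measure_pmf.prob ?M (UNIV - ?E) \<le>
      measure_pmf.prob ?M (?none (left_third n \<epsilon>) \<union> ?none (right_third n \<epsilon>))"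
    by (rule measure_pmf.finite_measure_mono) simp
  also have "\<dots> \<le>
      measure_pmf.prob ?M (?none (left_third n \<epsilon>)) + measure_pmf.prob ?M (?none (right_third n \<epsilon>))"
    by (rule measure_Un_le) simp_all
  also have "\<dots> \<le> 2 * (8/9)^n"
    using none[OF left_third_mass[OF eps(1) r]] none[OF right_third_mass[OF eps(1) r]] by simp
  finally show ?thesis using measure_pmf.prob_compl[of ?E ?M] by simp
qed

section \<open>Deterministic speed bound for flooding\<close>

lemma flood_set_subset: "flood_set n R pos s t \<subseteq> insert s {..<n}"
  by (induction t) auto

context
  fixes n :: nat and r R :: real and pos :: "nat \<Rightarrow> nat \<Rightarrow> point"
  assumes moves: "\<And>i t. i < n \<Longrightarrow> dist (pos i (Suc t)) (pos i t) \<le> r"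
    and r: "r \<ge> 0" and R: "R \<ge> 0"
begin

lemma displacement_le:
  assumes "i < n" shows "dist (pos i t) (pos i 0) \<le> real t * r"
proof (induction t)
  case (Suc t)
  have "dist (pos i (Suc t)) (pos i 0) \<le> dist (pos i (Suc t)) (pos i t) + dist (pos i t) (pos i 0)"
    by (rule dist_triangle)
  also have "\<dots> \<le> r + real t * r" using moves[OF assms] Suc by (rule add_mono)
  finally show ?case by (simp add: algebra_simps)
qed simp

text \<open>After \<open>t\<close> steps every informed node is within \<open>t (R + r)\<close> of the source's
  starting point: in one step a node can be reached over one edge (length \<open>\<le> R\<close>)
  and then move (by \<open>\<le> r\<close>).\<close>
lemma informed_within:
  assumes s: "s < n" and j: "j \<in> flood_set n R pos s t"
  shows "dist (pos j t) (pos s 0) \<le> real t * (R + r)"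
  using j
proof (induction t arbitrary: j)
  case (Suc t)
  have "j < n" using flood_set_subset Suc.prems s by fastforce
  then have step: "dist (pos j (Suc t)) (pos j t) \<le> r" by (rule moves)
  have "dist (pos j t) (pos s 0) \<le> R + real t * (R + r)"
  proof (cases "j \<in> flood_set n R pos s t")
    case True
    then show ?thesis using Suc.IH R by fastforce
  next
    case False
    then obtain i where i: "i \<in> flood_set n R pos s t" "dist (pos i t) (pos j t) \<le> R"
      using Suc.prems by (auto simp: adj_def edist_eq_dist)
    have "dist (pos j t) (pos s 0) \<le> dist (pos i t) (pos j t) + dist (pos i t) (pos s 0)"
      by (rule dist_triangle3)
    then show ?thesis using i Suc.IH[OF i(1)] by linarith
  qed
  moreover have "dist (pos j (Suc t)) (pos s 0) \<le> dist (pos j (Suc t)) (pos j t) + dist (pos j t) (pos s 0)"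
    by (rule dist_triangle)
  ultimately show ?case using step by (simp add: algebra_simps)
qed simp

lemma flooding_time_ge:
  assumes a: "a < n" and b: "b < n" and Rr: "R + r > 0"
    and D: "D \<le> dist (pos b 0) (pos a 0)"
  shows "ereal (D / (2 * (R + r))) \<le> ereal_of_enat (flooding_time n R pos)"
proof -
  have done_late: "D / (2 * (R + r)) \<le> real t" if "flood_set n R pos a t = {..<n}" for t
  proof -
    have "dist (pos b 0) (pos a 0) \<le> dist (pos b t) (pos b 0) + dist (pos b t) (pos a 0)"
      by (rule dist_triangle3)
    also have "\<dots> \<le> real t * r + real t * (R + r)"
      using displacement_le[OF b] informed_within[OF a, of b t] that b by (intro add_mono) auto
    also have "\<dots> \<le> 2 * real t * (R + r)" using R by (simp add: algebra_simps)
    finally show ?thesis using D Rr by (simp add: field_simps)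
  qed
  have "ereal (D / (2 * (R + r))) \<le> ereal_of_enat (flood_time_from n R pos a)"
    unfolding flood_time_from_def
    using LeastI_ex[of "\<lambda>t. flood_set n R pos a t = {..<n}"] done_late by auto
  also have "\<dots> \<le> ereal_of_enat (flooding_time n R pos)"
    unfolding flooding_time_def ereal_of_enat_le_iff using a by (intro SUP_upper) auto
  finally show ?thesis .
qed

end

lemma flooding_slow_whp:
  assumes eps: "\<epsilon> > 0" "\<epsilon> \<le> 1" and r: "r \<ge> 0" and R: "R \<ge> 0" "R + r > 0" and n: "100 \<le> n"
  shows "measure_pmf.prob (meg_pmf n \<epsilon> r m)
           {\<omega>. ereal (sqrt (real n) / (12 * (R + r))) \<le> ereal_of_enat (flooding_time n R (positions m \<omega>))}
         \<ge> 1 - 2 * (8/9)^n"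
proof -
  let ?M = "meg_pmf n \<epsilon> r m"
  let ?E = "{\<omega>. \<exists>a<n. \<exists>b<n. sqrt (real n) / 6 \<le> dist (\<omega> b ! 0) (\<omega> a ! 0)}"
  let ?G = "{\<omega>. ereal (sqrt (real n) / (12 * (R + r))) \<le> ereal_of_enat (flooding_time n R (positions m \<omega>))}"
  have "?E \<inter> set_pmf ?M \<subseteq> ?G"
  proof
    fix \<omega> assume \<omega>: "\<omega> \<in> ?E \<inter> set_pmf ?M"
    then obtain a b where ab: "a < n" "b < n" "sqrt (real n) / 6 \<le> dist (\<omega> b ! 0) (\<omega> a ! 0)"
      by blast
    have moves: "\<And>i t. i < n \<Longrightarrow> dist (positions m \<omega> i (Suc t)) (positions m \<omega> i t) \<le> r"
      using meg_positions_step[OF eps(1) r] \<omega> by blast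
    have "sqrt (real n) / 6 \<le> dist (positions m \<omega> b 0) (positions m \<omega> a 0)"
      using ab(3) by (simp add: positions_def)
    from flooding_time_ge[OF moves r R(1) ab(1,2) R(2) this]
    show "\<omega> \<in> ?G" by simp
  qed
  then have "measure_pmf.prob ?M (?E \<inter> set_pmf ?M) \<le> measure_pmf.prob ?M ?G"
    by (rule measure_pmf.finite_measure_mono) simp
  then have "measure_pmf.prob ?M ?E \<le> measure_pmf.prob ?M ?G"
    by (simp add: measure_Int_set_pmf)
  with far_starting_points[OF eps r n, of m] show ?thesis by linarith
qed

lemma eventually_small_failure: "\<exists>N::nat. \<forall>n\<ge>N. 100 \<le> n \<and> 2 * real n * (8/9)^n \<le> 1"
proof -
  have "(\<lambda>n. of_nat n * (8/9::real) ^ n) \<longlonglongrightarrow> 0"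
    by (rule powser_times_n_limit_0) simp
  then have "eventually (\<lambda>n. real n * (8/9::real) ^ n < 1/2) sequentially"
    by (rule order_tendstoD(2)) simp
  then have "eventually (\<lambda>n::nat. 100 \<le> n \<and> 2 * real n * (8/9)^n \<le> 1) sequentially"
    using eventually_ge_at_top[of 100] by eventually_elim auto
  then show ?thesis by (simp add: eventually_at_top_linorder)
qed

theorem mainTheorem9:
  "\<exists>c>0. \<exists>N::nat. \<forall>n\<ge>N. \<forall>r \<epsilon> R :: real.
     r \<ge> 0 \<longrightarrow> 0 < \<epsilon> \<longrightarrow> \<epsilon> \<le> 1 \<longrightarrow> R > \<epsilon> \<longrightarrow>
     (\<forall>m::nat. real m \<ge> c * sqrt (real n) / (R + r) \<longrightarrow>
        measure_pmf.prob (meg_pmf n \<epsilon> r m)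
          {\<omega>. ereal (c * sqrt (real n) / (R + r))
                 \<le> ereal_of_enat (flooding_time n R (positions m \<omega>))}
        \<ge> 1 - 1 / real n)"
proof -
  obtain N :: nat where N: "\<And>n. n \<ge> N \<Longrightarrow> 100 \<le> n \<and> 2 * real n * (8/9)^n \<le> 1"
    using eventually_small_failure by blast
  have "measure_pmf.prob (meg_pmf n \<epsilon> r m)
          {\<omega>. ereal (1/12 * sqrt (real n) / (R + r)) \<le> ereal_of_enat (flooding_time n R (positions m \<omega>))}
        \<ge> 1 - 1 / real n"
    if "n \<ge> N" "r \<ge> 0" "0 < \<epsilon>" "\<epsilon> \<le> 1" "R > \<epsilon>" for n m r \<epsilon> R
  proof -
    have n: "100 \<le> n" "2 * real n * (8/9)^n \<le> 1" using N[OF that(1)] by auto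
    have "1 - 2 * (8/9)^n \<le> measure_pmf.prob (meg_pmf n \<epsilon> r m)
          {\<omega>. ereal (sqrt (real n) / (12 * (R + r))) \<le> ereal_of_enat (flooding_time n R (positions m \<omega>))}"
      using that by (intro flooding_slow_whp[OF that(3,4,2) _ _ n(1)]) auto
    moreover have "1 - 1 / real n \<le> 1 - 2 * (8/9)^n" using n by (simp add: field_simps)
    ultimately show ?thesis by simp
  qed
  then show ?thesis by (intro exI[of _ "1/12"] conjI exI[of _ N] allI impI) auto
qed

end
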